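(* Let $\mathcal C$ be a Clifford circuit with $m$ measurements. The map $\mathbb Z_2^m\to\overline{\mathcal P}_{n(\Delta+1)}$, $u\mapsto\overleftarrow{F(u)}$, is an injective group morphism.
   Context: A Clifford circuit on $n$ qubits is a finite sequence of operations, each a unitary Clifford gate or the measurement of a Hermitian $n$-qubit Pauli, each with a level in $\{1,2,\dots\}$; operations of equal level have disjoint supports and levels are nondecreasing; depth $\Delta$ = maximal level. In circuit order the $j$-th measurement measures $S_j$ at level $\ell_j$, $j=1,\dots,m$. $\overline{\mathcal P}_N$ is the $N$-qubit Pauli group modulo phases. $U_\ell$ is the product of the unitary gates of level $\ell$ (identity if none). A fault operator $F\in\overline{\mathcal P}_{n(\Delta+1)}$ acts on qubits $(\ell+0.5,q)$, $0\le\ell\le\Delta$, $1\le q\le n$; $F_{\ell+0.5}$ is its level-$(\ell+0.5)$ component; $\eta_{\ell+0.5}(P)$ is the fault operator equal to $P\in\overline{\mathcal P}_n$ at level $\ell+0.5$ and $I$ elsewhere. Back-cumulant $\overleftarrow F$: start with $\overleftarrow F=F$; for $\ell=\Delta,\dots,1$ replace $\overleftarrow F_{\ell-0.5}$ by $\overleftarrow F_{\ell-0.5}\cdot U_\ell^{-1}\overleftarrow F_{\ell+0.5}U_\ell$. For $u\in\mathbb Z_2^m$, $F(u)=\prod_{j=1}^m\eta_{\ell_j-0.5}(S_j^{u_j})$. *)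

theory Defs
  imports "HOL-Analysis.Analysis" "Jordan_Normal_Form.Schur_Decomposition"
begin

text \<open>An element of the n-qubit Pauli group modulo phases is represented by its
  canonical representative X^x Z^z, i.e. by the pair of bits (x_q, z_q) on each qubit
  q < n (all other qubits carry (False, False)).\<close>

type_synonym pauli = "nat \<Rightarrow> bool \<times> bool"

definition pauli_I :: pauli where "pauli_I = (\<lambda>q. (False, False))"

definition pauli_valid :: "nat \<Rightarrow> pauli \<Rightarrow> bool" where
  "pauli_valid n P \<longleftrightarrow> (\<forall>q\<ge>n. P q = (False, False))"

definition pauli_mult :: "pauli \<Rightarrow> pauli \<Rightarrow> pauli" where
  "pauli_mult P Q = (\<lambda>q. (fst (P q) \<noteq> fst (Q q), snd (P q) \<noteq> snd (Q q)))"

definition pauli_supp :: "pauli \<Rightarrow> nat set" where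
  "pauli_supp P = {q. P q \<noteq> (False, False)}"

text \<open>The 2^n x 2^n complex matrix X^x Z^z (tensor product over qubits 0..n-1; qubit q
  corresponds to bit q of the computational basis index):
  X^x Z^z |c> = (-1)^(z.c) |c xor x>.\<close>

definition pauli_mat :: "nat \<Rightarrow> pauli \<Rightarrow> complex mat" where
  "pauli_mat n P = mat (2^n) (2^n) (\<lambda>(r, c).
     if (\<forall>q<n. bit r q = (bit c q \<noteq> fst (P q)))
     then (\<Prod>q<n. if snd (P q) \<and> bit c q then -1 else 1)
     else 0)"

definition pauli_single :: "nat \<Rightarrow> bool \<times> bool \<Rightarrow> pauli" where
  "pauli_single q ab = pauli_I(q := ab)"

definition unitary_mat :: "nat \<Rightarrow> complex mat \<Rightarrow> bool" where
  "unitary_mat n U \<longleftrightarrow> U \<in> carrier_mat (2^n) (2^n) \<and> U * mat_adjoint U = 1\<^sub>m (2^n)"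

definition clifford :: "nat \<Rightarrow> complex mat \<Rightarrow> bool" where
  "clifford n U \<longleftrightarrow> unitary_mat n U \<and>
     (\<forall>P. pauli_valid n P \<longrightarrow>
        (\<exists>Q c. pauli_valid n Q \<and> U * pauli_mat n P * mat_adjoint U = c \<cdot>\<^sub>m pauli_mat n Q))"

text \<open>Action P \<mapsto> U^{-1} P U on Paulis modulo phases: the unique Q (mod phase) with
  U Q = c P U for some scalar c, i.e. Q = c U^{-1} P U.\<close>
definition conj_inv :: "nat \<Rightarrow> complex mat \<Rightarrow> pauli \<Rightarrow> pauli" where
  "conj_inv n U P = (THE Q. pauli_valid n Q \<and>
      (\<exists>c. U * pauli_mat n Q = c \<cdot>\<^sub>m (pauli_mat n P * U)))"

text \<open>Support of a unitary: the qubits on which it acts nontrivially, i.e. the qubits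
  q < n such that U does not commute with all operators on qubit q (equivalently
  with X_q and Z_q).\<close>
definition unitary_supp :: "nat \<Rightarrow> complex mat \<Rightarrow> nat set" where
  "unitary_supp n U = {q. q < n \<and>
     \<not> (U * pauli_mat n (pauli_single q (True, False)) = pauli_mat n (pauli_single q (True, False)) * U
        \<and> U * pauli_mat n (pauli_single q (False, True)) = pauli_mat n (pauli_single q (False, True)) * U)}"

datatype operation = Gate "complex mat" | Meas pauli

text \<open>A circuit is a list of (level, operation) pairs in circuit order.\<close>
type_synonym circuit = "(nat \<times> operation) list"

fun op_supp :: "nat \<Rightarrow> operation \<Rightarrow> nat set" where
  "op_supp n (Gate U) = unitary_supp n U"
| "op_supp n (Meas S) = pauli_supp S"

fun op_valid :: "nat \<Rightarrow> operation \<Rightarrow> bool" where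
  "op_valid n (Gate U) = clifford n U"
| "op_valid n (Meas S) = pauli_valid n S"

definition clifford_circuit :: "nat \<Rightarrow> circuit \<Rightarrow> bool" where
  "clifford_circuit n C \<longleftrightarrow>
     (\<forall>(l, opr) \<in> set C. 1 \<le> l \<and> op_valid n opr) \<and>
     sorted (map fst C) \<and>
     (\<forall>i<length C. \<forall>j<length C. i \<noteq> j \<longrightarrow> fst (C ! i) = fst (C ! j) \<longrightarrow>
        op_supp n (snd (C ! i)) \<inter> op_supp n (snd (C ! j)) = {})"

definition depth :: "circuit \<Rightarrow> nat" where
  "depth C = Max (insert 0 (set (map fst C)))"

fun is_meas :: "operation \<Rightarrow> bool" where
  "is_meas (Meas _) = True" | "is_meas (Gate _) = False"

fun meas_pauli :: "operation \<Rightarrow> pauli" where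
  "meas_pauli (Meas S) = S" | "meas_pauli (Gate _) = pauli_I"

definition meas_list :: "circuit \<Rightarrow> (nat \<times> pauli) list" where
  "meas_list C = map (\<lambda>(l, opr). (l, meas_pauli opr)) (filter (\<lambda>(l, opr). is_meas opr) C)"

definition num_meas :: "circuit \<Rightarrow> nat" where
  "num_meas C = length (meas_list C)"

text \<open>U_l: product of the unitary gates of level l, in circuit order (later gates to the
  left); identity if none.\<close>
definition level_unitary :: "nat \<Rightarrow> circuit \<Rightarrow> nat \<Rightarrow> complex mat" where
  "level_unitary n C l = foldl (\<lambda>A (k, opr). case opr of Gate U \<Rightarrow> if k = l then U * A else A | Meas _ \<Rightarrow> A)
      (1\<^sub>m (2^n)) C"

text \<open>A fault operator is a function from the level index l (standing for level l+0.5,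
  0 \<le> l \<le> depth) to n-qubit Paulis modulo phases; it is the identity for l > depth.\<close>
type_synonym fault = "nat \<Rightarrow> pauli"

definition fault_valid :: "nat \<Rightarrow> nat \<Rightarrow> fault \<Rightarrow> bool" where
  "fault_valid n \<Delta> F \<longleftrightarrow> (\<forall>l\<le>\<Delta>. pauli_valid n (F l)) \<and> (\<forall>l>\<Delta>. F l = pauli_I)"

definition fault_mult :: "fault \<Rightarrow> fault \<Rightarrow> fault" where
  "fault_mult F G = (\<lambda>l. pauli_mult (F l) (G l))"

definition eta :: "nat \<Rightarrow> pauli \<Rightarrow> fault" where
  "eta l P = (\<lambda>k. if k = l then P else pauli_I)"

text \<open>Back-cumulant.  bc_aux k is the final value of the component at level
  (depth - k) + 0.5 produced by the procedure: the top level is unchanged, and the step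
  for level l replaces the component at l-0.5 by itself times U_l^{-1} (component l+0.5) U_l.\<close>
fun bc_aux :: "nat \<Rightarrow> circuit \<Rightarrow> fault \<Rightarrow> nat \<Rightarrow> pauli" where
  "bc_aux n C F 0 = F (depth C)"
| "bc_aux n C F (Suc k) =
     pauli_mult (F (depth C - Suc k))
       (conj_inv n (level_unitary n C (depth C - k)) (bc_aux n C F k))"

definition back_cumulant :: "nat \<Rightarrow> circuit \<Rightarrow> fault \<Rightarrow> fault" where
  "back_cumulant n C F = (\<lambda>l. if l \<le> depth C then bc_aux n C F (depth C - l) else F l)"

text \<open>F(u) = prod_j eta_{l_j - 0.5}(S_j^{u_j}); level l_j - 0.5 has index l_j - 1.\<close>
definition fault_of_outcomes :: "circuit \<Rightarrow> (nat \<Rightarrow> bool) \<Rightarrow> fault" where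
  "fault_of_outcomes C u =
     foldr (\<lambda>j F. fault_mult (eta (fst (meas_list C ! j) - 1)
                               (if u j then snd (meas_list C ! j) else pauli_I)) F)
           [0..<num_meas C] (\<lambda>_. pauli_I)"

definition bitvecs :: "nat \<Rightarrow> (nat \<Rightarrow> bool) set" where
  "bitvecs m = {u. \<forall>j\<ge>m. \<not> u j}"

definition bv_add :: "(nat \<Rightarrow> bool) \<Rightarrow> (nat \<Rightarrow> bool) \<Rightarrow> nat \<Rightarrow> bool" where
  "bv_add u v = (\<lambda>j. u j \<noteq> v j)"

end

theory Submission
  imports Defs
begin

text \<open>Both maps in u \<mapsto> F(u) \<mapsto> back-cumulant of F(u) are morphisms: F is a product
  of eta's, and every step of the back-cumulant multiplies a component by U^(-1) P U, which is
  multiplicative on Paulis modulo phases because U normalises the Pauli group.  The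
  back-cumulant has trivial kernel, as its components determine those of F from the top
  level down.  F(u) has trivial kernel because the measurements of one level have disjoint
  supports and are nontrivial, so each u_j is visible on some qubit of level l_j - 0.5.\<close>

section \<open>Pauli matrices\<close>

fun pauli_xmask :: "nat \<Rightarrow> pauli \<Rightarrow> nat" where
  "pauli_xmask 0 P = 0"
| "pauli_xmask (Suc n) P = (if fst (P n) then set_bit n (pauli_xmask n P) else pauli_xmask n P)"

lemma bit_pauli_xmask: "bit (pauli_xmask n P) q \<longleftrightarrow> q < n \<and> fst (P q)"
  by (induction n) (auto simp: bit_set_bit_iff less_Suc_eq)

lemma nat_less_power_iff_high_bits: "(x::nat) < 2^n \<longleftrightarrow> (\<forall>q\<ge>n. \<not> bit x q)"
proof
  assume "x < 2^n" then show "\<forall>q\<ge>n. \<not> bit x q"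
    by (metis bit_take_bit_iff linorder_not_le take_bit_nat_eq_self_iff)
next
  assume "\<forall>q\<ge>n. \<not> bit x q"
  then have "take_bit n x = x" by (intro bit_eqI) (auto simp: bit_take_bit_iff not_le)
  then show "x < 2^n" by (metis take_bit_nat_eq_self_iff)
qed

lemma pauli_xmask_less: "pauli_xmask n P < 2^n"
  by (simp add: nat_less_power_iff_high_bits bit_pauli_xmask)

lemma xor_less_power: "(a::nat) < 2^n \<Longrightarrow> b < 2^n \<Longrightarrow> xor a b < 2^n"
  by (simp add: nat_less_power_iff_high_bits bit_xor_iff)

lemma pauli_xmask_mult: "pauli_xmask n (pauli_mult P Q) = xor (pauli_xmask n P) (pauli_xmask n Q)"
  by (rule bit_eqI) (auto simp: bit_xor_iff bit_pauli_xmask pauli_mult_def)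

lemma pauli_xmask_I: "pauli_xmask n pauli_I = 0"
  by (induction n) (auto simp: pauli_I_def)

definition pauli_sign :: "nat \<Rightarrow> pauli \<Rightarrow> nat \<Rightarrow> complex" where
  "pauli_sign n P c = (\<Prod>q<n. if snd (P q) \<and> bit c q then -1 else 1)"

lemma pauli_mat_index:
  assumes r: "r < 2^n" and c: "c < 2^n"
  shows "pauli_mat n P $$ (r, c) = (if r = xor c (pauli_xmask n P) then pauli_sign n P c else 0)"
proof -
  have "(\<forall>q<n. bit r q = (bit c q \<noteq> fst (P q))) \<longleftrightarrow> r = xor c (pauli_xmask n P)"
  proof
    assume low: "\<forall>q<n. bit r q = (bit c q \<noteq> fst (P q))"
    show "r = xor c (pauli_xmask n P)"
    proof (rule bit_eqI)
      fix q show "bit r q = bit (xor c (pauli_xmask n P)) q"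
        using low r c by (cases "q < n") (auto simp: bit_xor_iff bit_pauli_xmask nat_less_power_iff_high_bits)
    qed
  qed (auto simp: bit_xor_iff bit_pauli_xmask)
  with r c show ?thesis unfolding pauli_mat_def pauli_sign_def by simp
qed

lemma pauli_mat_carrier [simp]: "pauli_mat n P \<in> carrier_mat (2^n) (2^n)"
  unfolding pauli_mat_def by simp

lemma dim_pauli_mat [simp]: "dim_row (pauli_mat n P) = 2^n" "dim_col (pauli_mat n P) = 2^n"
  unfolding pauli_mat_def by simp_all

lemma pauli_mat_I: "pauli_mat n pauli_I = 1\<^sub>m (2^n)"
  by (rule eq_matI) (auto simp: pauli_mat_index pauli_sign_def pauli_xmask_I, auto simp: pauli_I_def)

text \<open>The phase in X^x Z^z X^x' Z^z' = (-1)^(z.x') X^(x+x') Z^(z+z').\<close>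
definition pauli_mult_sign :: "nat \<Rightarrow> pauli \<Rightarrow> pauli \<Rightarrow> complex" where
  "pauli_mult_sign n P Q = (\<Prod>q<n. if snd (P q) \<and> fst (Q q) then -1 else 1)"

lemma pauli_sign_mult:
  "pauli_sign n P (xor c (pauli_xmask n Q)) * pauli_sign n Q c
     = pauli_mult_sign n P Q * pauli_sign n (pauli_mult P Q) c"
  unfolding pauli_sign_def pauli_mult_sign_def prod.distrib[symmetric]
  by (rule prod.cong) (auto simp: bit_xor_iff bit_pauli_xmask pauli_mult_def)

lemma pauli_mult_sign_square: "pauli_mult_sign n P Q * pauli_mult_sign n P Q = 1"
  unfolding pauli_mult_sign_def prod.distrib[symmetric] by (rule prod.neutral) auto

lemma smult_smult_mat: "(a::'a::comm_semiring_1) \<cdot>\<^sub>m (b \<cdot>\<^sub>m A) = (a * b) \<cdot>\<^sub>m A"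
  by (rule eq_matI) (auto simp: mult.assoc)

lemma one_smult_mat [simp]: "(1::'a::comm_semiring_1) \<cdot>\<^sub>m A = A"
  by (rule eq_matI) auto

lemma pauli_mat_mult:
  "pauli_mat n P * pauli_mat n Q = pauli_mult_sign n P Q \<cdot>\<^sub>m pauli_mat n (pauli_mult P Q)"
proof (rule eq_matI)
  fix r c assume "r < dim_row (pauli_mult_sign n P Q \<cdot>\<^sub>m pauli_mat n (pauli_mult P Q))"
    and "c < dim_col (pauli_mult_sign n P Q \<cdot>\<^sub>m pauli_mat n (pauli_mult P Q))"
  then have r: "r < 2^n" and c: "c < 2^n" by auto
  have c': "xor c (pauli_xmask n Q) < 2^n"
    using xor_less_power[OF c pauli_xmask_less] .
  have "(pauli_mat n P * pauli_mat n Q) $$ (r, c)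
      = (\<Sum>i<2^n. pauli_mat n P $$ (r, i) * pauli_mat n Q $$ (i, c))"
    using r c by (simp add: scalar_prod_def lessThan_atLeast0)
  also have "\<dots> = (\<Sum>i<2^n. if i = xor c (pauli_xmask n Q)
                              then pauli_mat n P $$ (r, i) * pauli_sign n Q c else 0)"
    by (rule sum.cong) (auto simp: pauli_mat_index c)
  also have "\<dots> = pauli_mat n P $$ (r, xor c (pauli_xmask n Q)) * pauli_sign n Q c"
    using c' by simp
  also have "\<dots> = (if r = xor c (pauli_xmask n (pauli_mult P Q))
                     then pauli_sign n P (xor c (pauli_xmask n Q)) * pauli_sign n Q c else 0)"
    using r c' by (simp add: pauli_mat_index pauli_xmask_mult ac_simps)
  also have "\<dots> = (pauli_mult_sign n P Q \<cdot>\<^sub>m pauli_mat n (pauli_mult P Q)) $$ (r, c)"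
    using r c by (simp add: pauli_mat_index pauli_sign_mult)
  finally show "(pauli_mat n P * pauli_mat n Q) $$ (r, c)
      = (pauli_mult_sign n P Q \<cdot>\<^sub>m pauli_mat n (pauli_mult P Q)) $$ (r, c)" .
qed auto

lemma pauli_mat_pauli_mult:
  "pauli_mat n (pauli_mult P Q) = pauli_mult_sign n P Q \<cdot>\<^sub>m (pauli_mat n P * pauli_mat n Q)"
  by (simp add: pauli_mat_mult smult_smult_mat pauli_mult_sign_square)

lemma pauli_sign_power:
  assumes "q < n"
  shows "pauli_sign n P (2^q) = (if snd (P q) then -1 else 1)"
proof -
  have "pauli_sign n P (2^q) = (\<Prod>q'<n. if q' = q then (if snd (P q) then -1 else 1) else 1)"
    unfolding pauli_sign_def by (rule prod.cong) (auto simp: bit_exp_iff)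
  with assms show ?thesis by simp
qed

lemma pauli_mat_xmask_column_zero: "pauli_mat n P $$ (pauli_xmask n Q, 0)
    = (if pauli_xmask n Q = pauli_xmask n P then 1 else 0)"
  using pauli_xmask_less by (simp add: pauli_mat_index pauli_sign_def)

text \<open>Column 0 of a Pauli matrix determines its X-part with coefficient 1, and
  column 2^q then determines the Z-part on qubit q.\<close>
lemma pauli_mat_eq_smult_imp_eq:
  assumes vP: "pauli_valid n P" and vQ: "pauli_valid n Q"
    and eq: "pauli_mat n Q = a \<cdot>\<^sub>m pauli_mat n P"
  shows "Q = P"
proof -
  have entry: "pauli_mat n Q $$ (r, c) = a * pauli_mat n P $$ (r, c)" if "r < 2^n" "c < 2^n" for r c
    using eq that by simp
  from entry[of "pauli_xmask n Q" 0] have "1 = a * (if pauli_xmask n Q = pauli_xmask n P then 1 else 0)"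
    using pauli_xmask_less by (simp add: pauli_mat_xmask_column_zero)
  then have xmask: "pauli_xmask n Q = pauli_xmask n P" and a: "a = 1"
    by (auto split: if_splits)
  have "Q q = P q" if q: "q < n" for q
  proof -
    have "fst (Q q) = fst (P q)"
      using xmask bit_pauli_xmask[of n Q q] bit_pauli_xmask[of n P q] q by auto
    moreover
    have p: "(2::nat)^q < 2^n" using q by simp
    have l: "xor (2^q) (pauli_xmask n Q) < 2^n" using xor_less_power[OF p pauli_xmask_less] .
    from entry[OF l p] pauli_mat_index[OF l p, of Q] pauli_mat_index[OF l p, of P]
    have "snd (Q q) = snd (P q)"
      by (simp add: xmask a pauli_sign_power q split: if_splits)
    ultimately show ?thesis by (simp add: prod_eq_iff)
  qed
  with vP vQ show ?thesis by (metis not_less pauli_valid_def ext)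
qed

lemma pauli_mat_neq_zero_smult: "pauli_mat n Q \<noteq> 0 \<cdot>\<^sub>m M"
proof
  assume h: "pauli_mat n Q = 0 \<cdot>\<^sub>m M"
  then have "dim_row M = 2^n" "dim_col M = 2^n"
    by (metis dim_pauli_mat index_smult_mat(2,3))+
  with h have "pauli_mat n Q $$ (pauli_xmask n Q, 0) = 0"
    using pauli_xmask_less by (metis index_smult_mat(1) mult_zero_left zero_less_numeral zero_less_power)
  then show False by (simp add: pauli_mat_xmask_column_zero)
qed

lemma pauli_mat_proportional_imp_eq:
  assumes "pauli_valid n Q" "pauli_valid n Q'"
    and h: "pauli_mat n Q = c \<cdot>\<^sub>m M" and h': "pauli_mat n Q' = c' \<cdot>\<^sub>m M"
  shows "Q' = Q"
proof -
  have "c \<noteq> 0" using h pauli_mat_neq_zero_smult by auto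
  then have "pauli_mat n Q' = (c' / c) \<cdot>\<^sub>m pauli_mat n Q"
    unfolding h h' smult_smult_mat by simp
  then show ?thesis using pauli_mat_eq_smult_imp_eq assms(1,2) by blast
qed

lemma pauli_valid_I [simp]: "pauli_valid n pauli_I"
  by (simp add: pauli_valid_def pauli_I_def)

lemma pauli_valid_mult: "pauli_valid n P \<Longrightarrow> pauli_valid n Q \<Longrightarrow> pauli_valid n (pauli_mult P Q)"
  by (simp add: pauli_valid_def pauli_mult_def)

lemma finite_pauli_valid: "finite {P. pauli_valid n P}"
proof -
  have "{P. pauli_valid n P} \<subseteq> (\<lambda>xs q. if q < n then xs ! q else (False, False)) ` {xs. length xs = n}"
  proof
    fix P assume "P \<in> {P. pauli_valid n P}"
    then have "P = (\<lambda>q. if q < n then map P [0..<n] ! q else (False, False))"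
      by (auto simp: pauli_valid_def)
    then show "P \<in> (\<lambda>xs q. if q < n then xs ! q else (False, False)) ` {xs. length xs = n}"
      by (rule image_eqI) simp
  qed
  moreover have "finite {xs :: (bool \<times> bool) list. length xs = n}"
    using finite_lists_length_eq[OF finite_class.finite_UNIV, of n] by simp
  ultimately show ?thesis by (meson finite_imageI finite_subset)
qed

section \<open>Clifford unitaries and conjugation of Paulis\<close>

text \<open>U is invertible and U^(-1) P U is a Pauli up to phase for every Pauli P; the
  conjugation is stated without the inverse, as in conj_inv.\<close>
definition pauli_normalizing :: "nat \<Rightarrow> complex mat \<Rightarrow> bool" where
  "pauli_normalizing n U \<longleftrightarrow> U \<in> carrier_mat (2^n) (2^n)
     \<and> (\<exists>V \<in> carrier_mat (2^n) (2^n). V * U = 1\<^sub>m (2^n))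
     \<and> (\<forall>P. pauli_valid n P \<longrightarrow>
          (\<exists>Q c. pauli_valid n Q \<and> U * pauli_mat n Q = c \<cdot>\<^sub>m (pauli_mat n P * U)))"

lemma pauli_normalizing_one: "pauli_normalizing n (1\<^sub>m (2^n))"
  unfolding pauli_normalizing_def
proof (intro conjI allI impI)
  fix P assume "pauli_valid n P"
  moreover have "1\<^sub>m (2^n) * pauli_mat n P = 1 \<cdot>\<^sub>m (pauli_mat n P * 1\<^sub>m (2^n))" by simp
  ultimately show "\<exists>Q c. pauli_valid n Q \<and> 1\<^sub>m (2^n) * pauli_mat n Q = c \<cdot>\<^sub>m (pauli_mat n P * 1\<^sub>m (2^n))"
    by blast
qed (auto intro: bexI[of _ "1\<^sub>m (2^n)"])

lemma pauli_normalizing_mult: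
  assumes U: "pauli_normalizing n U" and A: "pauli_normalizing n A"
  shows "pauli_normalizing n (U * A)"
proof -
  let ?N = "2^n::nat"
  obtain VU where Uc: "U \<in> carrier_mat ?N ?N" and VUc: "VU \<in> carrier_mat ?N ?N" and VUU: "VU * U = 1\<^sub>m ?N"
    using U unfolding pauli_normalizing_def by blast
  obtain VA where Ac: "A \<in> carrier_mat ?N ?N" and VAc: "VA \<in> carrier_mat ?N ?N" and VAA: "VA * A = 1\<^sub>m ?N"
    using A unfolding pauli_normalizing_def by blast
  have "(VA * VU) * (U * A) = VA * (VU * (U * A))"
    by (rule assoc_mult_mat[OF VAc VUc mult_carrier_mat[OF Uc Ac]])
  also have "VU * (U * A) = (VU * U) * A"
    by (rule assoc_mult_mat[OF VUc Uc Ac, symmetric])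
  finally have left_inverse: "(VA * VU) * (U * A) = 1\<^sub>m ?N"
    using VUU VAA Ac by simp
  have "\<exists>Q c. pauli_valid n Q \<and> (U * A) * pauli_mat n Q = c \<cdot>\<^sub>m (pauli_mat n P * (U * A))"
    if vP: "pauli_valid n P" for P
  proof -
    obtain Q' c where vQ': "pauli_valid n Q'" and e: "U * pauli_mat n Q' = c \<cdot>\<^sub>m (pauli_mat n P * U)"
      using U vP unfolding pauli_normalizing_def by blast
    obtain Q c' where vQ: "pauli_valid n Q" and e': "A * pauli_mat n Q = c' \<cdot>\<^sub>m (pauli_mat n Q' * A)"
      using A vQ' unfolding pauli_normalizing_def by blast
    have "(U * A) * pauli_mat n Q = U * (A * pauli_mat n Q)"
      by (rule assoc_mult_mat[OF Uc Ac pauli_mat_carrier])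
    also have "\<dots> = c' \<cdot>\<^sub>m (U * (pauli_mat n Q' * A))" unfolding e'
      by (rule mult_smult_distrib[OF Uc mult_carrier_mat[OF pauli_mat_carrier Ac]])
    also have "U * (pauli_mat n Q' * A) = (U * pauli_mat n Q') * A"
      by (rule assoc_mult_mat[OF Uc pauli_mat_carrier Ac, symmetric])
    also have "\<dots> = c \<cdot>\<^sub>m ((pauli_mat n P * U) * A)" unfolding e
      by (rule mult_smult_assoc_mat[OF mult_carrier_mat[OF pauli_mat_carrier Uc] Ac])
    also have "(pauli_mat n P * U) * A = pauli_mat n P * (U * A)"
      by (rule assoc_mult_mat[OF pauli_mat_carrier Uc Ac])
    finally have "(U * A) * pauli_mat n Q = (c' * c) \<cdot>\<^sub>m (pauli_mat n P * (U * A))"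
      by (simp add: smult_smult_mat)
    with vQ show ?thesis by blast
  qed
  with Uc Ac VAc VUc left_inverse show ?thesis
    unfolding pauli_normalizing_def by (meson mult_carrier_mat)
qed

lemma clifford_adjoint_mult:
  assumes "clifford n U"
  shows "mat_adjoint U \<in> carrier_mat (2^n) (2^n)" and "mat_adjoint U * U = 1\<^sub>m (2^n)"
proof -
  have U: "U \<in> carrier_mat (2^n) (2^n)" and UW: "U * mat_adjoint U = 1\<^sub>m (2^n)"
    using assms unfolding clifford_def unitary_mat_def by auto
  show W: "mat_adjoint U \<in> carrier_mat (2^n) (2^n)"
    using U unfolding mat_adjoint_def by (intro carrier_matI) auto
  show "mat_adjoint U * U = 1\<^sub>m (2^n)"
    by (rule mat_mult_left_right_inverse[OF U W UW])
qed

text \<open>The Clifford condition only says that U P U^(-1) is a Pauli up to phase; since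
  this map is injective on the finite set of Paulis, it is also surjective.\<close>
lemma clifford_conj_surj:
  assumes cl: "clifford n U" and vP: "pauli_valid n P"
  shows "\<exists>Q c. pauli_valid n Q \<and> U * pauli_mat n Q * mat_adjoint U = c \<cdot>\<^sub>m pauli_mat n P"
proof -
  let ?N = "2^n::nat" and ?W = "mat_adjoint U" and ?Paulis = "{P. pauli_valid n P}"
  have Uc: "U \<in> carrier_mat ?N ?N" using cl unfolding clifford_def unitary_mat_def by auto
  note Wc = clifford_adjoint_mult(1)[OF cl] and WU = clifford_adjoint_mult(2)[OF cl]
  define f where "f P = (SOME Q. pauli_valid n Q \<and> (\<exists>c. U * pauli_mat n P * ?W = c \<cdot>\<^sub>m pauli_mat n Q))" for P
  have f_spec: "pauli_valid n (f P) \<and> (\<exists>c. U * pauli_mat n P * ?W = c \<cdot>\<^sub>m pauli_mat n (f P))"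
    if "pauli_valid n P" for P
  proof -
    have "\<exists>Q. pauli_valid n Q \<and> (\<exists>c. U * pauli_mat n P * ?W = c \<cdot>\<^sub>m pauli_mat n Q)"
      using cl that unfolding clifford_def by blast
    then show ?thesis unfolding f_def by (rule someI_ex)
  qed
  have undo: "pauli_mat n P = c \<cdot>\<^sub>m (?W * pauli_mat n Q * U)"
    if e: "U * pauli_mat n P * ?W = c \<cdot>\<^sub>m pauli_mat n Q" for P Q c
  proof -
    have "pauli_mat n P = (?W * U) * pauli_mat n P * (?W * U)"
      using WU by simp
    also have "\<dots> = ?W * (U * pauli_mat n P * ?W) * U"
      using Uc Wc by (simp add: assoc_mult_mat[of _ ?N ?N _ ?N _ ?N] mult_carrier_mat[of _ ?N ?N _ ?N])
    also have "\<dots> = ?W * (c \<cdot>\<^sub>m pauli_mat n Q) * U" by (simp only: e)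
    also have "?W * (c \<cdot>\<^sub>m pauli_mat n Q) = c \<cdot>\<^sub>m (?W * pauli_mat n Q)"
      by (rule mult_smult_distrib[OF Wc pauli_mat_carrier])
    also have "(c \<cdot>\<^sub>m (?W * pauli_mat n Q)) * U = c \<cdot>\<^sub>m (?W * pauli_mat n Q * U)"
      by (rule mult_smult_assoc_mat[OF mult_carrier_mat[OF Wc pauli_mat_carrier] Uc])
    finally show ?thesis .
  qed
  have inj: "inj_on f ?Paulis"
  proof (rule inj_onI)
    fix P1 P2 assume p1: "P1 \<in> ?Paulis" and p2: "P2 \<in> ?Paulis" and eq: "f P1 = f P2"
    obtain c1 where e1: "U * pauli_mat n P1 * ?W = c1 \<cdot>\<^sub>m pauli_mat n (f P1)" using f_spec p1 by blast
    obtain c2 where e2: "U * pauli_mat n P2 * ?W = c2 \<cdot>\<^sub>m pauli_mat n (f P1)" using f_spec p2 eq by auto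
    show "P1 = P2"
      using p1 p2 by (intro pauli_mat_proportional_imp_eq[OF _ _ undo[OF e2] undo[OF e1]]) auto
  qed
  have "f ` ?Paulis \<subseteq> ?Paulis" using f_spec by blast
  then have "f ` ?Paulis = ?Paulis"
    by (rule endo_inj_surj[OF finite_pauli_valid _ inj])
  with vP have "P \<in> f ` ?Paulis" by simp
  then obtain Q where vQ: "pauli_valid n Q" and "f Q = P" by blast
  with f_spec[OF vQ] show ?thesis by auto
qed

lemma clifford_pauli_normalizing:
  assumes cl: "clifford n U"
  shows "pauli_normalizing n U"
proof -
  let ?N = "2^n::nat" and ?W = "mat_adjoint U"
  have Uc: "U \<in> carrier_mat ?N ?N" using cl unfolding clifford_def unitary_mat_def by auto
  note Wc = clifford_adjoint_mult(1)[OF cl] and WU = clifford_adjoint_mult(2)[OF cl]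
  have "\<exists>Q c. pauli_valid n Q \<and> U * pauli_mat n Q = c \<cdot>\<^sub>m (pauli_mat n P * U)"
    if vP: "pauli_valid n P" for P
  proof -
    obtain Q c where vQ: "pauli_valid n Q" and e: "U * pauli_mat n Q * ?W = c \<cdot>\<^sub>m pauli_mat n P"
      using clifford_conj_surj[OF cl vP] by blast
    have "U * pauli_mat n Q = (U * pauli_mat n Q * ?W) * U"
      using Uc Wc WU by (simp add: assoc_mult_mat[of _ ?N ?N])
    also have "\<dots> = c \<cdot>\<^sub>m (pauli_mat n P * U)"
      unfolding e by (rule mult_smult_assoc_mat[OF pauli_mat_carrier Uc])
    finally show ?thesis using vQ by blast
  qed
  with Uc Wc WU show ?thesis unfolding pauli_normalizing_def by blast
qed

lemma pauli_normalizing_conj_unique: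
  assumes U: "pauli_normalizing n U" and "pauli_valid n Q" "pauli_valid n Q'"
    and h: "U * pauli_mat n Q = c \<cdot>\<^sub>m (pauli_mat n P * U)"
    and h': "U * pauli_mat n Q' = c' \<cdot>\<^sub>m (pauli_mat n P * U)"
  shows "Q' = Q"
proof -
  let ?N = "2^n::nat"
  obtain V where V: "V \<in> carrier_mat ?N ?N" "V * U = 1\<^sub>m ?N" and Uc: "U \<in> carrier_mat ?N ?N"
    using U unfolding pauli_normalizing_def by blast
  have undo: "pauli_mat n R = d \<cdot>\<^sub>m (V * (pauli_mat n P * U))"
    if e: "U * pauli_mat n R = d \<cdot>\<^sub>m (pauli_mat n P * U)" for R d
  proof -
    have "pauli_mat n R = (V * U) * pauli_mat n R" using V by simp
    also have "\<dots> = V * (U * pauli_mat n R)"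
      by (rule assoc_mult_mat[OF V(1) Uc pauli_mat_carrier])
    also have "\<dots> = d \<cdot>\<^sub>m (V * (pauli_mat n P * U))" unfolding e
      by (rule mult_smult_distrib[OF V(1) mult_carrier_mat[OF pauli_mat_carrier Uc]])
    finally show ?thesis .
  qed
  show ?thesis by (rule pauli_mat_proportional_imp_eq[OF assms(2,3) undo[OF h] undo[OF h']])
qed

lemma conj_inv_spec:
  assumes "pauli_normalizing n U" "pauli_valid n P"
  shows "pauli_valid n (conj_inv n U P)"
    and "\<exists>c. U * pauli_mat n (conj_inv n U P) = c \<cdot>\<^sub>m (pauli_mat n P * U)"
proof -
  have "\<exists>!Q. pauli_valid n Q \<and> (\<exists>c. U * pauli_mat n Q = c \<cdot>\<^sub>m (pauli_mat n P * U))"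
    using assms pauli_normalizing_conj_unique[OF assms(1)] unfolding pauli_normalizing_def by metis
  then have "pauli_valid n (conj_inv n U P) \<and> (\<exists>c. U * pauli_mat n (conj_inv n U P) = c \<cdot>\<^sub>m (pauli_mat n P * U))"
    unfolding conj_inv_def by (rule theI')
  then show "pauli_valid n (conj_inv n U P)"
    and "\<exists>c. U * pauli_mat n (conj_inv n U P) = c \<cdot>\<^sub>m (pauli_mat n P * U)" by blast+
qed

lemma conj_invI:
  assumes "pauli_normalizing n U" "pauli_valid n P" "pauli_valid n Q"
    and "U * pauli_mat n Q = c \<cdot>\<^sub>m (pauli_mat n P * U)"
  shows "conj_inv n U P = Q"
  using conj_inv_spec[OF assms(1,2)] pauli_normalizing_conj_unique[OF assms(1)] assms(3,4) by metis

lemma conj_inv_I: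
  assumes "pauli_normalizing n U"
  shows "conj_inv n U pauli_I = pauli_I"
proof (rule conj_invI[OF assms pauli_valid_I pauli_valid_I])
  have "U \<in> carrier_mat (2^n) (2^n)" using assms unfolding pauli_normalizing_def by blast
  then show "U * pauli_mat n pauli_I = 1 \<cdot>\<^sub>m (pauli_mat n pauli_I * U)"
    by (simp add: pauli_mat_I)
qed

lemma conj_inv_mult:
  assumes U: "pauli_normalizing n U" and P1: "pauli_valid n P1" and P2: "pauli_valid n P2"
  shows "conj_inv n U (pauli_mult P1 P2) = pauli_mult (conj_inv n U P1) (conj_inv n U P2)"
proof -
  define Q1 where "Q1 = conj_inv n U P1"
  define Q2 where "Q2 = conj_inv n U P2"
  obtain c1 where v1: "pauli_valid n Q1" and e1: "U * pauli_mat n Q1 = c1 \<cdot>\<^sub>m (pauli_mat n P1 * U)"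
    using conj_inv_spec[OF U P1] unfolding Q1_def by blast
  obtain c2 where v2: "pauli_valid n Q2" and e2: "U * pauli_mat n Q2 = c2 \<cdot>\<^sub>m (pauli_mat n P2 * U)"
    using conj_inv_spec[OF U P2] unfolding Q2_def by blast
  have Uc: "U \<in> carrier_mat (2^n) (2^n)" using U unfolding pauli_normalizing_def by blast
  let ?A1 = "pauli_mat n P1" and ?A2 = "pauli_mat n P2" and ?B1 = "pauli_mat n Q1" and ?B2 = "pauli_mat n Q2"
  have "U * pauli_mat n (pauli_mult Q1 Q2) = pauli_mult_sign n Q1 Q2 \<cdot>\<^sub>m (U * (?B1 * ?B2))"
    unfolding pauli_mat_pauli_mult
    by (rule mult_smult_distrib[OF Uc mult_carrier_mat[OF pauli_mat_carrier pauli_mat_carrier]])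
  also have "U * (?B1 * ?B2) = (U * ?B1) * ?B2"
    by (rule assoc_mult_mat[OF Uc pauli_mat_carrier pauli_mat_carrier, symmetric])
  also have "\<dots> = c1 \<cdot>\<^sub>m ((?A1 * U) * ?B2)" unfolding e1
    by (rule mult_smult_assoc_mat[OF mult_carrier_mat[OF pauli_mat_carrier Uc] pauli_mat_carrier])
  also have "(?A1 * U) * ?B2 = ?A1 * (U * ?B2)"
    by (rule assoc_mult_mat[OF pauli_mat_carrier Uc pauli_mat_carrier])
  also have "\<dots> = c2 \<cdot>\<^sub>m (?A1 * (?A2 * U))" unfolding e2
    by (rule mult_smult_distrib[OF pauli_mat_carrier mult_carrier_mat[OF pauli_mat_carrier Uc]])
  also have "?A1 * (?A2 * U) = (?A1 * ?A2) * U"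
    by (rule assoc_mult_mat[OF pauli_mat_carrier pauli_mat_carrier Uc, symmetric])
  also have "\<dots> = pauli_mult_sign n P1 P2 \<cdot>\<^sub>m (pauli_mat n (pauli_mult P1 P2) * U)"
    unfolding pauli_mat_mult by (rule mult_smult_assoc_mat[OF pauli_mat_carrier Uc])
  finally have "U * pauli_mat n (pauli_mult Q1 Q2) =
      (pauli_mult_sign n Q1 Q2 * (c1 * (c2 * pauli_mult_sign n P1 P2)))
        \<cdot>\<^sub>m (pauli_mat n (pauli_mult P1 P2) * U)"
    by (simp add: smult_smult_mat)
  then show ?thesis unfolding Q1_def[symmetric] Q2_def[symmetric]
    by (rule conj_invI[OF U pauli_valid_mult[OF P1 P2] pauli_valid_mult[OF v1 v2]])
qed

lemma foldl_gates_pauli_normalizing: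
  assumes "\<forall>(k, opr) \<in> set xs. op_valid n opr" and "pauli_normalizing n A"
  shows "pauli_normalizing n
           (foldl (\<lambda>A (k, opr). case opr of Gate U \<Rightarrow> if k = l then U * A else A | Meas _ \<Rightarrow> A) A xs)"
  using assms
proof (induction xs arbitrary: A)
  case Nil
  then show ?case by simp
next
  case (Cons x xs)
  obtain k opr where x: "x = (k, opr)" by (cases x)
  have "op_valid n opr" using Cons.prems(1) x by auto
  then have "pauli_normalizing n (case opr of Gate U \<Rightarrow> if k = l then U * A else A | Meas _ \<Rightarrow> A)"
    using Cons.prems(2) clifford_pauli_normalizing pauli_normalizing_mult by (cases opr) auto
  then show ?case using Cons.IH Cons.prems(1) x by simp
qed

lemma level_unitary_pauli_normalizing:
  assumes "clifford_circuit n C"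
  shows "pauli_normalizing n (level_unitary n C l)"
  unfolding level_unitary_def
  by (rule foldl_gates_pauli_normalizing[OF _ pauli_normalizing_one])
     (use assms in \<open>auto simp: clifford_circuit_def\<close>)

section \<open>Faults of measurement outcomes\<close>

lemma fault_mult_self: "fault_mult F F = (\<lambda>_. pauli_I)"
  by (simp add: fun_eq_iff fault_mult_def pauli_mult_def pauli_I_def)

definition outcome_fault :: "(nat \<Rightarrow> nat) \<Rightarrow> (nat \<Rightarrow> pauli) \<Rightarrow> (nat \<Rightarrow> bool) \<Rightarrow> nat list \<Rightarrow> fault" where
  "outcome_fault L S u js =
     foldr (\<lambda>j F. fault_mult (eta (L j) (if u j then S j else pauli_I)) F) js (\<lambda>_. pauli_I)"

lemma outcome_fault_Nil [simp]: "outcome_fault L S u [] = (\<lambda>_. pauli_I)"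
  by (simp add: outcome_fault_def)

lemma outcome_fault_Cons [simp]:
  "outcome_fault L S u (j # js) = fault_mult (eta (L j) (if u j then S j else pauli_I)) (outcome_fault L S u js)"
  by (simp add: outcome_fault_def)

lemma outcome_fault_valid:
  "\<forall>j\<in>set js. pauli_valid n (S j) \<Longrightarrow> pauli_valid n (outcome_fault L S u js l)"
  by (induction js) (auto simp: fault_mult_def eta_def pauli_valid_mult)

lemma outcome_fault_eq_I: "\<forall>j\<in>set js. L j \<noteq> l \<Longrightarrow> outcome_fault L S u js l = pauli_I"
  by (induction js) (auto simp: fault_mult_def eta_def pauli_mult_def pauli_I_def)

lemma outcome_fault_bv_add:
  "outcome_fault L S (bv_add u v) js = fault_mult (outcome_fault L S u js) (outcome_fault L S v js)"
  by (induction js) (auto simp: fun_eq_iff fault_mult_def pauli_mult_def eta_def pauli_I_def bv_add_def)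

lemma outcome_fault_qubit_trivial:
  "\<forall>j\<in>set js. L j = l \<longrightarrow> u j \<longrightarrow> S j q = (False, False) \<Longrightarrow> outcome_fault L S u js l q = (False, False)"
  by (induction js) (auto simp: fault_mult_def pauli_mult_def eta_def pauli_I_def)

lemma outcome_fault_qubit:
  assumes "distinct js" "j0 \<in> set js"
    and "\<forall>j\<in>set js. j \<noteq> j0 \<longrightarrow> L j = L j0 \<longrightarrow> u j \<longrightarrow> S j q = (False, False)"
  shows "outcome_fault L S u js (L j0) q = (if u j0 then S j0 q else (False, False))"
  using assms
proof (induction js)
  case Nil
  then show ?case by simp
next
  case (Cons j js)
  show ?case
  proof (cases "j = j0")
    case True
    with Cons.prems have "outcome_fault L S u js (L j0) q = (False, False)"
      by (intro outcome_fault_qubit_trivial) auto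
    with True show ?thesis by (auto simp: fault_mult_def pauli_mult_def eta_def pauli_I_def)
  next
    case False
    with Cons show ?thesis by (auto simp: fault_mult_def pauli_mult_def eta_def pauli_I_def)
  qed
qed

lemma meas_list_in_circuit: "x \<in> set (meas_list C) \<Longrightarrow> (fst x, Meas (snd x)) \<in> set C"
  unfolding meas_list_def by (auto elim!: is_meas.elims)

lemma meas_list_level_pauli_valid:
  assumes cc: "clifford_circuit n C" and j: "j < num_meas C"
  shows "1 \<le> fst (meas_list C ! j)" and "fst (meas_list C ! j) \<le> depth C"
    and "pauli_valid n (snd (meas_list C ! j))"
proof -
  have "meas_list C ! j \<in> set (meas_list C)" using j unfolding num_meas_def by simp
  then have mem: "(fst (meas_list C ! j), Meas (snd (meas_list C ! j))) \<in> set C"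
    by (rule meas_list_in_circuit)
  then show "fst (meas_list C ! j) \<le> depth C"
    unfolding depth_def by (intro Max_ge) force+
  from mem cc show "1 \<le> fst (meas_list C ! j)" and "pauli_valid n (snd (meas_list C ! j))"
    unfolding clifford_circuit_def by fastforce+
qed

lemma meas_list_same_level_disjoint:
  assumes cc: "clifford_circuit n C"
    and i: "i < num_meas C" and j: "j < num_meas C" and "i \<noteq> j"
    and level: "fst (meas_list C ! i) = fst (meas_list C ! j)"
  shows "pauli_supp (snd (meas_list C ! i)) \<inter> pauli_supp (snd (meas_list C ! j)) = {}"
proof -
  define R where "R a b \<longleftrightarrow> (fst a = fst b \<longrightarrow> pauli_supp (snd a) \<inter> pauli_supp (snd b) = {})"
    for a b :: "nat \<times> pauli"
  let ?meas = "\<lambda>(l, opr). is_meas opr" and ?pair = "\<lambda>(l, opr). (l, meas_pauli opr)"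
  have "sorted_wrt (\<lambda>x y. fst x = fst y \<longrightarrow> op_supp n (snd x) \<inter> op_supp n (snd y) = {}) C"
    using cc unfolding clifford_circuit_def sorted_wrt_iff_nth_less by auto
  then have "sorted_wrt (\<lambda>x y. fst x = fst y \<longrightarrow> op_supp n (snd x) \<inter> op_supp n (snd y) = {})
               (filter ?meas C)"
    by (rule sorted_wrt_filter)
  then have "sorted_wrt (\<lambda>x y. R (?pair x) (?pair y)) (filter ?meas C)"
    by (rule sorted_wrt_mono_rel[rotated]) (auto simp: R_def elim!: is_meas.elims)
  then have sorted: "sorted_wrt R (meas_list C)"
    unfolding meas_list_def sorted_wrt_map .
  have "R (meas_list C ! i) (meas_list C ! j) \<or> R (meas_list C ! j) (meas_list C ! i)"
    using sorted i j \<open>i \<noteq> j\<close> unfolding sorted_wrt_iff_nth_less num_meas_def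
    by (metis linorder_neqE_nat)
  with level show ?thesis unfolding R_def by auto
qed

lemma fault_of_outcomes_eq_outcome_fault:
  "fault_of_outcomes C u
     = outcome_fault (\<lambda>j. fst (meas_list C ! j) - 1) (\<lambda>j. snd (meas_list C ! j)) u [0..<num_meas C]"
  by (simp add: fault_of_outcomes_def outcome_fault_def)

lemma fault_of_outcomes_valid:
  "clifford_circuit n C \<Longrightarrow> pauli_valid n (fault_of_outcomes C u l)"
  unfolding fault_of_outcomes_eq_outcome_fault
  by (rule outcome_fault_valid) (simp add: meas_list_level_pauli_valid)

lemma fault_of_outcomes_above_depth:
  assumes "clifford_circuit n C" "depth C < l"
  shows "fault_of_outcomes C u l = pauli_I"
  unfolding fault_of_outcomes_eq_outcome_fault
  by (rule outcome_fault_eq_I) (use assms meas_list_level_pauli_valid(2)[OF assms(1)] in fastforce)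

lemma fault_of_outcomes_bv_add:
  "fault_of_outcomes C (bv_add u v) = fault_mult (fault_of_outcomes C u) (fault_of_outcomes C v)"
  unfolding fault_of_outcomes_eq_outcome_fault by (rule outcome_fault_bv_add)

lemma fault_of_outcomes_eq_I_imp:
  assumes cc: "clifford_circuit n C"
    and nontrivial: "\<forall>j < num_meas C. snd (meas_list C ! j) \<noteq> pauli_I"
    and trivial: "fault_of_outcomes C u = (\<lambda>_. pauli_I)"
    and j0: "j0 < num_meas C"
  shows "\<not> u j0"
proof
  assume "u j0"
  let ?L = "\<lambda>j. fst (meas_list C ! j) - 1" and ?S = "\<lambda>j. snd (meas_list C ! j)"
  obtain q where q: "?S j0 q \<noteq> (False, False)"
    using nontrivial j0 unfolding pauli_I_def by auto
  have others: "?S j q = (False, False)" if "j < num_meas C" "j \<noteq> j0" "?L j = ?L j0" for j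
  proof -
    have "fst (meas_list C ! j) = fst (meas_list C ! j0)"
      using that(3) meas_list_level_pauli_valid(1)[OF cc that(1)] meas_list_level_pauli_valid(1)[OF cc j0]
      by linarith
    then have "pauli_supp (?S j) \<inter> pauli_supp (?S j0) = {}"
      using meas_list_same_level_disjoint[OF cc] that j0 by blast
    with q show ?thesis unfolding pauli_supp_def by auto
  qed
  have "outcome_fault ?L ?S u [0..<num_meas C] (?L j0) q = (if u j0 then ?S j0 q else (False, False))"
    by (rule outcome_fault_qubit) (use j0 others in auto)
  with \<open>u j0\<close> trivial q show False
    unfolding fault_of_outcomes_eq_outcome_fault by (simp add: pauli_I_def)
qed

section \<open>The back-cumulant\<close>

lemma bc_aux_valid:
  assumes "clifford_circuit n C" "\<forall>l. pauli_valid n (F l)"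
  shows "pauli_valid n (bc_aux n C F k)"
  by (induction k)
     (use assms conj_inv_spec(1)[OF level_unitary_pauli_normalizing[OF assms(1)]] in
      \<open>auto intro: pauli_valid_mult\<close>)

lemma bc_aux_fault_mult:
  assumes cc: "clifford_circuit n C" and F: "\<forall>l. pauli_valid n (F l)" and H: "\<forall>l. pauli_valid n (H l)"
  shows "bc_aux n C (fault_mult F H) k = pauli_mult (bc_aux n C F k) (bc_aux n C H k)"
proof (induction k)
  case 0
  then show ?case by (simp add: fault_mult_def)
next
  case (Suc k)
  let ?U = "level_unitary n C (depth C - k)"
  have "conj_inv n ?U (bc_aux n C (fault_mult F H) k)
      = pauli_mult (conj_inv n ?U (bc_aux n C F k)) (conj_inv n ?U (bc_aux n C H k))"
    unfolding Suc
    by (rule conj_inv_mult[OF level_unitary_pauli_normalizing[OF cc] bc_aux_valid[OF cc F] bc_aux_valid[OF cc H]])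
  then show ?case
    by (auto simp: fault_mult_def pauli_mult_def)
qed

lemma back_cumulant_fault_mult:
  assumes "clifford_circuit n C" "\<forall>l. pauli_valid n (F l)" "\<forall>l. pauli_valid n (H l)"
  shows "back_cumulant n C (fault_mult F H) = fault_mult (back_cumulant n C F) (back_cumulant n C H)"
  unfolding back_cumulant_def fault_mult_def
  by (rule ext) (simp add: bc_aux_fault_mult[OF assms, unfolded fault_mult_def])

lemma back_cumulant_fault_valid:
  assumes "clifford_circuit n C" "\<forall>l. pauli_valid n (F l)" "\<forall>l>depth C. F l = pauli_I"
  shows "fault_valid n (depth C) (back_cumulant n C F)"
  using assms bc_aux_valid[OF assms(1,2)] unfolding fault_valid_def back_cumulant_def by auto

lemma back_cumulant_eq_I_imp:
  assumes cc: "clifford_circuit n C" and trivial: "back_cumulant n C F = (\<lambda>_. pauli_I)"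
  shows "F = (\<lambda>_. pauli_I)"
proof
  fix l
  have bc: "bc_aux n C F (depth C - l') = pauli_I" if "l' \<le> depth C" for l'
    using trivial that unfolding back_cumulant_def by (metis (mono_tags))
  consider "depth C < l" | "l = depth C" | "l < depth C" by linarith
  then show "F l = pauli_I"
  proof cases
    case 1
    then show ?thesis using trivial unfolding back_cumulant_def by (metis (mono_tags) not_le)
  next
    case 2
    then show ?thesis using bc[of l] by simp
  next
    case 3
    define k where "k = depth C - Suc l"
    have "depth C - Suc k = l" "depth C - k = Suc l"
      using 3 unfolding k_def by auto
    then have "bc_aux n C F (Suc k) = pauli_mult (F l) (conj_inv n (level_unitary n C (Suc l)) (bc_aux n C F k))"
      by simp
    moreover have "bc_aux n C F (Suc k) = pauli_I" "bc_aux n C F k = pauli_I"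
      using bc[of l] bc[of "Suc l"] 3 unfolding k_def by (simp_all add: Suc_diff_Suc)
    ultimately have "pauli_I = pauli_mult (F l) pauli_I"
      by (simp add: conj_inv_I[OF level_unitary_pauli_normalizing[OF cc]])
    then show ?thesis by (simp add: fun_eq_iff pauli_mult_def pauli_I_def)
  qed
qed

theorem mainTheorem9:
  fixes n :: nat and C :: circuit
  assumes "clifford_circuit n C"
    and "\<forall>j < num_meas C. snd (meas_list C ! j) \<noteq> pauli_I"
  shows "(\<forall>u \<in> bitvecs (num_meas C).
            fault_valid n (depth C) (back_cumulant n C (fault_of_outcomes C u)))
       \<and> (\<forall>u \<in> bitvecs (num_meas C). \<forall>v \<in> bitvecs (num_meas C).
            back_cumulant n C (fault_of_outcomes C (bv_add u v))
              = fault_mult (back_cumulant n C (fault_of_outcomes C u))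
                           (back_cumulant n C (fault_of_outcomes C v)))
       \<and> inj_on (\<lambda>u. back_cumulant n C (fault_of_outcomes C u)) (bitvecs (num_meas C))"
proof -
  let ?B = "\<lambda>u. back_cumulant n C (fault_of_outcomes C u)"
  note valid = fault_of_outcomes_valid[OF assms(1)]
  have hom: "?B (bv_add u v) = fault_mult (?B u) (?B v)" for u v
    unfolding fault_of_outcomes_bv_add by (rule back_cumulant_fault_mult[OF assms(1)]) (simp_all add: valid)
  have "inj_on ?B (bitvecs (num_meas C))"
  proof (rule inj_onI)
    fix u v assume u: "u \<in> bitvecs (num_meas C)" and v: "v \<in> bitvecs (num_meas C)" and "?B u = ?B v"
    then have "?B (bv_add u v) = (\<lambda>_. pauli_I)" by (simp add: hom fault_mult_self)
    then have "fault_of_outcomes C (bv_add u v) = (\<lambda>_. pauli_I)"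
      by (rule back_cumulant_eq_I_imp[OF assms(1)])
    then have agree: "\<not> bv_add u v j" if "j < num_meas C" for j
      using fault_of_outcomes_eq_I_imp[OF assms] that by blast
    show "u = v"
    proof
      fix j show "u j = v j"
        using u v agree by (cases "j < num_meas C") (auto simp: bitvecs_def bv_add_def)
    qed
  qed
  moreover have "fault_valid n (depth C) (?B u)" for u
    by (rule back_cumulant_fault_valid[OF assms(1)])
       (simp_all add: valid fault_of_outcomes_above_depth[OF assms(1)])
  ultimately show ?thesis using hom by blast
qed

end
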